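(* The Perfect Split Heuristic $h$ is consistent on $\mathcal G_{\mathcal X,\mathcal Y}$: for every OR node $o$ with terminal child $t$ and AND children $a_1,\dots,a_s$, $$h(o)\le\min_{c\in\{t,a_1,\dots,a_s\}}\big(\mathrm{cost}(o,c)+h(c)\big),$$ and for every AND node $a$ with children $o_0,o_1$, $$h(a)\le\sum_{c\in\{o_0,o_1\}}\big(\mathrm{cost}(a,c)+h(c)\big).$$
   Context: Let $x_1,\dots,x_N\in\{0,1\}^F$ be a binary dataset $\mathcal X$ with labels $\mathcal Y\in\{0,1\}^N$, $[N]=\{1,\dots,N\}$. For $\mathcal I\subseteq[N]$, $f\in[F]$, $k\in\{0,1\}$ let $\mathcal I|_{f=k}=\{i\in\mathcal I:(x_i)_f=k\}$, $c^k(\mathcal I)=|\{i\in\mathcal I:y_i=k\}|$, $\mathcal V(\mathcal I)=\{f:\mathcal I|_{f=0}\neq\emptyset\text{ and }\mathcal I|_{f=1}\neq\emptyset\}$. Fix $\rho^1,\rho^0>0$, $\alpha\in(0,1)$, $\beta\ge0$. Let $\ell_{\rm leaf}(c^1,c^0)=B(c^1+\rho^1,c^0+\rho^0)/B(\rho^1,\rho^0)$ ($B$ the Beta function), $p_{\rm split}(d)=\alpha(1+d)^{-\beta}$, $p_{\rm leaf}(d,\mathcal I)=1$ if $\mathcal V(\mathcal I)=\emptyset$ and $1-p_{\rm split}(d)$ otherwise, $p_{\rm inner}(d,\mathcal I)=0$ if $\mathcal V(\mathcal I)=\emptyset$ and $p_{\rm split}(d)/|\mathcal V(\mathcal I)|$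 otherwise; $-\log0=+\infty$. $\mathcal G_{\mathcal X,\mathcal Y}$: for nonempty $\mathcal I\subseteq[N]$ and $d\in\{0,\dots,F\}$, an OR node $o_{\mathcal I,d}$ with a terminal child $t_{\mathcal I,d}$ via an edge of cost $-\log p_{\rm leaf}(d,\mathcal I)-\log\ell_{\rm leaf}(c^1(\mathcal I),c^0(\mathcal I))$; for $d<F$ and each $f\in\mathcal V(\mathcal I)$ an AND child $a_{\mathcal I,d,f}$ via an edge of cost $-\log p_{\rm inner}(d,\mathcal I)$, and $a_{\mathcal I,d,f}$ has cost-$0$ edges to $o_{\mathcal I|_{f=0},d+1}$ and $o_{\mathcal I|_{f=1},d+1}$; the root is $r=o_{[N],0}$ and only nodes reachable from $r$ are kept. $\mathrm{cost}(u,v)$ denotes the cost of edge $u\to v$. Perfect Split Heuristic: $h(t)=0$ for terminal nodes; $h(o_{\mathcal I,d})=-\max\{\log\ell_{\rm leaf}(c^1(\mathcal I),c^0(\mathcal I)),\ \log p_{\rm split}(d)+\log\ell_{\rm leaf}(c^1(\mathcal I),0)+\log\ell_{\rm leaf}(0,c^0(\mathcal I))\}$; $h(a_{\mathcal I,d,f})=h(o_{\mathcal I|_{f=0},d+1})+h(o_{\mathcal I|_{f=1},d+1})$. *)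

theory Defs
  imports "HOL-Analysis.Analysis"
begin

text \<open>Dataset: N points, F features. Point i (1 \<le> i \<le> N) has feature f (1 \<le> f \<le> F)
  equal to 1 iff X i f, and label 1 iff Y i. Only values on [N] x [F] matter.\<close>

definition restr :: "(nat \<Rightarrow> nat \<Rightarrow> bool) \<Rightarrow> nat set \<Rightarrow> nat \<Rightarrow> bool \<Rightarrow> nat set" where
  "restr X I f k = {i \<in> I. X i f = k}"

definition cnt :: "(nat \<Rightarrow> bool) \<Rightarrow> nat set \<Rightarrow> bool \<Rightarrow> nat" where
  "cnt Y I k = card {i \<in> I. Y i = k}"

definition Vset :: "nat \<Rightarrow> (nat \<Rightarrow> nat \<Rightarrow> bool) \<Rightarrow> nat set \<Rightarrow> nat set" where
  "Vset F X I = {f \<in> {1..F}. restr X I f False \<noteq> {} \<and> restr X I f True \<noteq> {}}"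

definition lleaf :: "real \<Rightarrow> real \<Rightarrow> nat \<Rightarrow> nat \<Rightarrow> real" where
  "lleaf \<rho>1 \<rho>0 c1 c0 = Beta (real c1 + \<rho>1) (real c0 + \<rho>0) / Beta \<rho>1 \<rho>0"

definition psplit :: "real \<Rightarrow> real \<Rightarrow> nat \<Rightarrow> real" where
  "psplit \<alpha> \<beta> d = \<alpha> * (1 + real d) powr (- \<beta>)"

definition pleaf :: "real \<Rightarrow> real \<Rightarrow> nat \<Rightarrow> (nat \<Rightarrow> nat \<Rightarrow> bool) \<Rightarrow> nat \<Rightarrow> nat set \<Rightarrow> real" where
  "pleaf \<alpha> \<beta> F X d I = (if Vset F X I = {} then 1 else 1 - psplit \<alpha> \<beta> d)"

definition pinner :: "real \<Rightarrow> real \<Rightarrow> nat \<Rightarrow> (nat \<Rightarrow> nat \<Rightarrow> bool) \<Rightarrow> nat \<Rightarrow> nat set \<Rightarrow> real" where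
  "pinner \<alpha> \<beta> F X d I =
     (if Vset F X I = {} then 0 else psplit \<alpha> \<beta> d / real (card (Vset F X I)))"

definition nlog :: "real \<Rightarrow> ereal" where
  "nlog p = (if p = 0 then \<infinity> else ereal (- ln p))"

datatype node = OrN "nat set" nat | TermN "nat set" nat | AndN "nat set" nat nat

text \<open>Edges of the AND/OR graph before restricting to nodes reachable from the root.\<close>
fun edge :: "nat \<Rightarrow> nat \<Rightarrow> (nat \<Rightarrow> nat \<Rightarrow> bool) \<Rightarrow> node \<Rightarrow> node \<Rightarrow> bool" where
  "edge N F X (OrN I d) (TermN J e) \<longleftrightarrow>
     I \<noteq> {} \<and> I \<subseteq> {1..N} \<and> d \<le> F \<and> J = I \<and> e = d"
| "edge N F X (OrN I d) (AndN J e f) \<longleftrightarrow>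
     I \<noteq> {} \<and> I \<subseteq> {1..N} \<and> d < F \<and> f \<in> Vset F X I \<and> J = I \<and> e = d"
| "edge N F X (AndN I d f) (OrN J e) \<longleftrightarrow>
     I \<noteq> {} \<and> I \<subseteq> {1..N} \<and> d < F \<and> f \<in> Vset F X I \<and> e = d + 1 \<and>
     (J = restr X I f False \<or> J = restr X I f True)"
| "edge N F X _ _ \<longleftrightarrow> False"

definition root :: "nat \<Rightarrow> node" where
  "root N = OrN {1..N} 0"

definition reachable :: "nat \<Rightarrow> nat \<Rightarrow> (nat \<Rightarrow> nat \<Rightarrow> bool) \<Rightarrow> node \<Rightarrow> bool" where
  "reachable N F X v \<longleftrightarrow> (root N, v) \<in> {(u, w). edge N F X u w}\<^sup>*"

text \<open>Edge costs (only meaningful on actual edges).\<close>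
fun cost :: "real \<Rightarrow> real \<Rightarrow> real \<Rightarrow> real \<Rightarrow> nat \<Rightarrow> (nat \<Rightarrow> nat \<Rightarrow> bool) \<Rightarrow> (nat \<Rightarrow> bool)
             \<Rightarrow> node \<Rightarrow> node \<Rightarrow> ereal" where
  "cost \<rho>1 \<rho>0 \<alpha> \<beta> F X Y (OrN I d) (TermN J e) =
     nlog (pleaf \<alpha> \<beta> F X d I) + nlog (lleaf \<rho>1 \<rho>0 (cnt Y I True) (cnt Y I False))"
| "cost \<rho>1 \<rho>0 \<alpha> \<beta> F X Y (OrN I d) (AndN J e f) = nlog (pinner \<alpha> \<beta> F X d I)"
| "cost \<rho>1 \<rho>0 \<alpha> \<beta> F X Y (AndN I d f) (OrN J e) = 0"
| "cost \<rho>1 \<rho>0 \<alpha> \<beta> F X Y _ _ = 0"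

definition hOr :: "real \<Rightarrow> real \<Rightarrow> real \<Rightarrow> real \<Rightarrow> (nat \<Rightarrow> bool) \<Rightarrow> nat set \<Rightarrow> nat \<Rightarrow> real" where
  "hOr \<rho>1 \<rho>0 \<alpha> \<beta> Y I d =
     - max (ln (lleaf \<rho>1 \<rho>0 (cnt Y I True) (cnt Y I False)))
           (ln (psplit \<alpha> \<beta> d) + ln (lleaf \<rho>1 \<rho>0 (cnt Y I True) 0)
              + ln (lleaf \<rho>1 \<rho>0 0 (cnt Y I False)))"

fun heur :: "real \<Rightarrow> real \<Rightarrow> real \<Rightarrow> real \<Rightarrow> (nat \<Rightarrow> nat \<Rightarrow> bool) \<Rightarrow> (nat \<Rightarrow> bool) \<Rightarrow> node \<Rightarrow> real" where
  "heur \<rho>1 \<rho>0 \<alpha> \<beta> X Y (TermN I d) = 0"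
| "heur \<rho>1 \<rho>0 \<alpha> \<beta> X Y (OrN I d) = hOr \<rho>1 \<rho>0 \<alpha> \<beta> Y I d"
| "heur \<rho>1 \<rho>0 \<alpha> \<beta> X Y (AndN I d f) =
     hOr \<rho>1 \<rho>0 \<alpha> \<beta> Y (restr X I f False) (d + 1) + hOr \<rho>1 \<rho>0 \<alpha> \<beta> Y (restr X I f True) (d + 1)"

end

theory Submission
  imports Defs
begin

text \<open>
  At an OR node the heuristic is the smaller of the leaf cost \<open>-log \<ell>(c\<^sup>1, c\<^sup>0)\<close> and
  the cost of an ideal split into a pure 1-leaf and a pure 0-leaf. Against the terminal child
  this only needs \<open>p_leaf \<le> 1\<close>. Against an AND child it rests on two Beta-function inequalities:
  \<open>\<ell>(a, b) \<le> \<ell>(a, 0) \<ell>(0, b)\<close>, so every OR node has heuristic at least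
  \<open>-log \<ell>(c\<^sup>1, 0) - log \<ell>(0, c\<^sup>0)\<close>, and supermultiplicativity of \<open>\<ell>(-, 0)\<close> and \<open>\<ell>(0, -)\<close>,
  so distributing the pure counts over two children never lowers this bound; moreover
  \<open>p_inner \<le> p_split\<close>. Both inequalities follow from
  \<open>B(x + n, y) = B(x, y) \<Prod>k<n. (x + k) / (x + y + k)\<close>, whose factors decrease in \<open>y\<close> and
  increase in \<open>x\<close>. At an AND node the heuristic is exactly the sum over its two (distinct) children.
\<close>

definition beta_shift :: "real \<Rightarrow> real \<Rightarrow> nat \<Rightarrow> real" where
  "beta_shift x y n = (\<Prod>k<n. (x + real k) / (x + y + real k))"

lemma Beta_pos: "(x::real) > 0 \<Longrightarrow> y > 0 \<Longrightarrow> Beta x y > 0"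
  unfolding Beta_def by simp

lemma Beta_add_nat_left:
  fixes x y :: real
  assumes "x > 0" "y > 0"
  shows "Beta (x + real n) y = beta_shift x y n * Beta x y"
proof (induction n)
  case 0
  show ?case by (simp add: beta_shift_def)
next
  case (Suc n)
  have "x + real n \<notin> \<int>\<^sub>\<le>\<^sub>0"
    using assms by (auto elim!: nonpos_Ints_cases)
  then have "(x + real n + y) * Beta (x + real n + 1) y = (x + real n) * Beta (x + real n) y"
    by (rule Beta_plus1_left)
  moreover have "x + real n + y > 0" using assms by simp
  ultimately have "Beta (x + real (Suc n)) y = (x + real n) / (x + y + real n) * Beta (x + real n) y"
    by (simp add: field_simps)
  with Suc show ?case by (simp add: beta_shift_def)
qed

lemma beta_shift_antimono_right:
  assumes "x > 0" "0 \<le> y" "y \<le> y'"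
  shows "beta_shift x y' n \<le> beta_shift x y n"
  unfolding beta_shift_def using assms by (intro prod_mono) (auto intro!: divide_left_mono)

lemma beta_shift_mono_left:
  assumes "0 < x" "x \<le> x'" "y > 0"
  shows "beta_shift x y n \<le> beta_shift x' y n"
  unfolding beta_shift_def using assms
  by (intro prod_mono) (auto simp: divide_simps algebra_simps intro!: mult_right_mono)

lemma Beta_shift_ratio_antimono_right:
  fixes x y y' :: real
  assumes "x > 0" "0 < y" "y \<le> y'"
  shows "Beta (x + real n) y' * Beta x y \<le> Beta (x + real n) y * Beta x y'"
proof -
  have "Beta (x + real n) y' * Beta x y = beta_shift x y' n * (Beta x y * Beta x y')"
    using assms by (simp add: Beta_add_nat_left)
  also have "\<dots> \<le> beta_shift x y n * (Beta x y * Beta x y')"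
    using assms by (intro mult_right_mono beta_shift_antimono_right)
      (auto intro!: less_imp_le[OF mult_pos_pos] Beta_pos)
  also have "\<dots> = Beta (x + real n) y * Beta x y'"
    using assms by (simp add: Beta_add_nat_left)
  finally show ?thesis .
qed

lemma Beta_shift_ratio_mono_left:
  fixes x x' y :: real
  assumes "0 < x" "x \<le> x'" "y > 0"
  shows "Beta (x + real n) y * Beta x' y \<le> Beta (x' + real n) y * Beta x y"
proof -
  have "Beta (x + real n) y * Beta x' y = beta_shift x y n * (Beta x y * Beta x' y)"
    using assms by (simp add: Beta_add_nat_left)
  also have "\<dots> \<le> beta_shift x' y n * (Beta x y * Beta x' y)"
    using assms by (intro mult_right_mono beta_shift_mono_left)
      (auto intro!: less_imp_le[OF mult_pos_pos] Beta_pos)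
  also have "\<dots> = Beta (x' + real n) y * Beta x y"
    using assms by (simp add: Beta_add_nat_left)
  finally show ?thesis .
qed

context
  fixes \<rho>1 \<rho>0 :: real
  assumes \<rho>1_pos: "\<rho>1 > 0" and \<rho>0_pos: "\<rho>0 > 0"
begin

lemma lleaf_pos: "lleaf \<rho>1 \<rho>0 a b > 0"
  unfolding lleaf_def using \<rho>1_pos \<rho>0_pos by (simp add: Beta_pos)

lemma lleaf_le_mult_pure: "lleaf \<rho>1 \<rho>0 a b \<le> lleaf \<rho>1 \<rho>0 a 0 * lleaf \<rho>1 \<rho>0 0 b"
proof -
  have "Beta (\<rho>1 + real a) (\<rho>0 + real b) * Beta \<rho>1 \<rho>0 \<le> Beta (\<rho>1 + real a) \<rho>0 * Beta \<rho>1 (\<rho>0 + real b)"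
    using \<rho>1_pos \<rho>0_pos by (intro Beta_shift_ratio_antimono_right) auto
  then show ?thesis
    unfolding lleaf_def using Beta_pos[OF \<rho>1_pos \<rho>0_pos] by (simp add: field_simps add_ac)
qed

lemma lleaf_pure_left_supermult: "lleaf \<rho>1 \<rho>0 a 0 * lleaf \<rho>1 \<rho>0 b 0 \<le> lleaf \<rho>1 \<rho>0 (a + b) 0"
proof -
  have "Beta (\<rho>1 + real b) \<rho>0 * Beta (\<rho>1 + real a) \<rho>0 \<le> Beta (\<rho>1 + real a + real b) \<rho>0 * Beta \<rho>1 \<rho>0"
    using \<rho>1_pos \<rho>0_pos by (intro Beta_shift_ratio_mono_left) auto
  then show ?thesis
    unfolding lleaf_def using Beta_pos[OF \<rho>1_pos \<rho>0_pos] by (simp add: field_simps add_ac)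
qed

lemma lleaf_pure_right_supermult: "lleaf \<rho>1 \<rho>0 0 a * lleaf \<rho>1 \<rho>0 0 b \<le> lleaf \<rho>1 \<rho>0 0 (a + b)"
proof -
  have "Beta (\<rho>0 + real b) \<rho>1 * Beta (\<rho>0 + real a) \<rho>1 \<le> Beta (\<rho>0 + real a + real b) \<rho>1 * Beta \<rho>0 \<rho>1"
    using \<rho>1_pos \<rho>0_pos by (intro Beta_shift_ratio_mono_left) auto
  then show ?thesis
    unfolding lleaf_def using Beta_pos[OF \<rho>1_pos \<rho>0_pos]
    by (simp add: field_simps add_ac Beta_commute[of \<rho>1])
qed

lemma ln_lleaf_le_add_pure:
  "ln (lleaf \<rho>1 \<rho>0 a b) \<le> ln (lleaf \<rho>1 \<rho>0 a 0) + ln (lleaf \<rho>1 \<rho>0 0 b)"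
  using lleaf_le_mult_pure[of a b] lleaf_pos by (subst ln_mult_pos[symmetric]) auto

end

lemma psplit_pos: "0 < \<alpha> \<Longrightarrow> 0 < psplit \<alpha> \<beta> d"
  unfolding psplit_def by simp

lemma psplit_le: assumes "0 \<le> \<alpha>" "0 \<le> \<beta>" shows "psplit \<alpha> \<beta> d \<le> \<alpha>"
proof -
  have "1 \<le> (1 + real d) powr \<beta>"
    using assms by (intro ge_one_powr_ge_zero) auto
  then have "(1 + real d) powr (- \<beta>) \<le> 1"
    by (simp add: powr_minus_divide)
  then show ?thesis
    unfolding psplit_def using assms by (simp add: mult_left_le)
qed

lemma nlog_of_pos: "p > 0 \<Longrightarrow> nlog p = ereal (- ln p)"
  unfolding nlog_def by simp

lemma cnt_restr_split:
  assumes "finite I"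
  shows "cnt Y (restr X I f False) k + cnt Y (restr X I f True) k = cnt Y I k"
proof -
  have "{i \<in> I. Y i = k} = {i \<in> restr X I f False. Y i = k} \<union> {i \<in> restr X I f True. Y i = k}"
    unfolding restr_def by auto
  then show ?thesis
    unfolding cnt_def using assms by (simp add: card_Un_disjoint restr_def disjoint_iff)
qed

lemma finite_Vset: "finite (Vset F X I)"
  unfolding Vset_def by simp

lemma restr_False_ne_True: "f \<in> Vset F X I \<Longrightarrow> restr X I f False \<noteq> restr X I f True"
  unfolding Vset_def restr_def by auto

lemma reachable_AndN:
  assumes "reachable N F X (AndN I d f)"
  shows "I \<noteq> {} \<and> I \<subseteq> {1..N} \<and> d < F \<and> f \<in> Vset F X I"
proof -
  have "(root N, AndN I d f) \<in> {(u, w). edge N F X u w}\<^sup>*"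
    using assms unfolding reachable_def .
  then show ?thesis
  proof (cases rule: rtranclE)
    case base
    then show ?thesis by (simp add: root_def)
  next
    case (step u)
    then show ?thesis by (cases u) auto
  qed
qed

lemma edge_AndN_children:
  assumes "I \<noteq> {}" "I \<subseteq> {1..N}" "d < F" "f \<in> Vset F X I"
  shows "{c. edge N F X (AndN I d f) c}
           = {OrN (restr X I f False) (d + 1), OrN (restr X I f True) (d + 1)}"
proof (intro set_eqI iffI)
  fix c
  assume "c \<in> {c. edge N F X (AndN I d f) c}"
  then show "c \<in> {OrN (restr X I f False) (d + 1), OrN (restr X I f True) (d + 1)}"
    by (cases c) auto
qed (use assms in auto)

lemma heur_AndN_eq_sum:
  assumes "reachable N F X (AndN I d f)"
  shows "ereal (heur \<rho>1 \<rho>0 \<alpha> \<beta> X Y (AndN I d f))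
           = (\<Sum>c \<in> {c. edge N F X (AndN I d f) c}.
                cost \<rho>1 \<rho>0 \<alpha> \<beta> F X Y (AndN I d f) c + ereal (heur \<rho>1 \<rho>0 \<alpha> \<beta> X Y c))"
proof -
  have "I \<noteq> {}" "I \<subseteq> {1..N}" "d < F" and f: "f \<in> Vset F X I"
    using reachable_AndN[OF assms] by auto
  then show ?thesis
    using restr_False_ne_True[OF f] by (simp add: edge_AndN_children)
qed

context
  fixes \<rho>1 \<rho>0 \<alpha> \<beta> :: real
  assumes \<rho>1_pos: "\<rho>1 > 0" and \<rho>0_pos: "\<rho>0 > 0"
    and \<alpha>_pos: "0 < \<alpha>" and \<alpha>_less_1: "\<alpha> < 1" and \<beta>_nonneg: "\<beta> \<ge> 0"
begin

lemma psplit_bounds: "0 < psplit \<alpha> \<beta> d" "psplit \<alpha> \<beta> d < 1"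
  using psplit_pos[OF \<alpha>_pos] psplit_le[of \<alpha> \<beta> d] \<alpha>_pos \<alpha>_less_1 \<beta>_nonneg by auto

lemma hOr_ge_pure:
  "- (ln (lleaf \<rho>1 \<rho>0 (cnt Y I True) 0) + ln (lleaf \<rho>1 \<rho>0 0 (cnt Y I False)))
     \<le> hOr \<rho>1 \<rho>0 \<alpha> \<beta> Y I d"
proof -
  have "ln (psplit \<alpha> \<beta> d) \<le> 0"
    using psplit_bounds[of d] by simp
  then show ?thesis
    using ln_lleaf_le_add_pure[OF \<rho>1_pos \<rho>0_pos, of "cnt Y I True" "cnt Y I False"]
    unfolding hOr_def by linarith
qed

lemma heur_OrN_le_TermN:
  "ereal (heur \<rho>1 \<rho>0 \<alpha> \<beta> X Y (OrN I d))
     \<le> cost \<rho>1 \<rho>0 \<alpha> \<beta> F X Y (OrN I d) (TermN J e) + ereal (heur \<rho>1 \<rho>0 \<alpha> \<beta> X Y (TermN J e))"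
proof -
  have pleaf: "0 < pleaf \<alpha> \<beta> F X d I" "pleaf \<alpha> \<beta> F X d I \<le> 1"
    unfolding pleaf_def using psplit_bounds[of d] by auto
  then have "ln (pleaf \<alpha> \<beta> F X d I) \<le> 0"
    by simp
  then have "hOr \<rho>1 \<rho>0 \<alpha> \<beta> Y I d
      \<le> - ln (pleaf \<alpha> \<beta> F X d I) + - ln (lleaf \<rho>1 \<rho>0 (cnt Y I True) (cnt Y I False))"
    unfolding hOr_def by linarith
  then show ?thesis
    using pleaf lleaf_pos[OF \<rho>1_pos \<rho>0_pos] by (simp add: nlog_of_pos)
qed

lemma heur_OrN_le_AndN:
  assumes "finite I" and f: "f \<in> Vset F X I"
  shows "ereal (heur \<rho>1 \<rho>0 \<alpha> \<beta> X Y (OrN I d))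
     \<le> cost \<rho>1 \<rho>0 \<alpha> \<beta> F X Y (OrN I d) (AndN I d f) + ereal (heur \<rho>1 \<rho>0 \<alpha> \<beta> X Y (AndN I d f))"
proof -
  define J0 J1 where "J0 = restr X I f False" and "J1 = restr X I f True"
  let ?L = "lleaf \<rho>1 \<rho>0"
  have "card (Vset F X I) \<ge> 1"
    using f by (metis One_nat_def Suc_leI card_gt_0_iff empty_iff finite_Vset)
  then have pinner: "0 < pinner \<alpha> \<beta> F X d I" "pinner \<alpha> \<beta> F X d I \<le> psplit \<alpha> \<beta> d"
    unfolding pinner_def using f psplit_bounds[of d] by (auto simp: divide_le_eq)
  have "ln (?L (cnt Y J0 True) 0) + ln (?L (cnt Y J1 True) 0) \<le> ln (?L (cnt Y I True) 0)"
    using lleaf_pure_left_supermult[OF \<rho>1_pos \<rho>0_pos, of "cnt Y J0 True" "cnt Y J1 True"]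
      lleaf_pos[OF \<rho>1_pos \<rho>0_pos] cnt_restr_split[OF \<open>finite I\<close>]
    unfolding J0_def J1_def by (subst ln_mult_pos[symmetric]) auto
  moreover have "ln (?L 0 (cnt Y J0 False)) + ln (?L 0 (cnt Y J1 False)) \<le> ln (?L 0 (cnt Y I False))"
    using lleaf_pure_right_supermult[OF \<rho>1_pos \<rho>0_pos, of "cnt Y J0 False" "cnt Y J1 False"]
      lleaf_pos[OF \<rho>1_pos \<rho>0_pos] cnt_restr_split[OF \<open>finite I\<close>]
    unfolding J0_def J1_def by (subst ln_mult_pos[symmetric]) auto
  moreover have "hOr \<rho>1 \<rho>0 \<alpha> \<beta> Y I d
      \<le> - ln (psplit \<alpha> \<beta> d) - ln (?L (cnt Y I True) 0) - ln (?L 0 (cnt Y I False))"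
    unfolding hOr_def by simp
  moreover have "- ln (pinner \<alpha> \<beta> F X d I) \<ge> - ln (psplit \<alpha> \<beta> d)"
    using pinner by simp
  ultimately have "hOr \<rho>1 \<rho>0 \<alpha> \<beta> Y I d
      \<le> - ln (pinner \<alpha> \<beta> F X d I) + (hOr \<rho>1 \<rho>0 \<alpha> \<beta> Y J0 (d + 1) + hOr \<rho>1 \<rho>0 \<alpha> \<beta> Y J1 (d + 1))"
    using hOr_ge_pure[of Y J0 "d + 1"] hOr_ge_pure[of Y J1 "d + 1"] by linarith
  then show ?thesis
    using pinner unfolding J0_def J1_def by (simp add: nlog_of_pos)
qed

lemma heur_OrN_consistent:
  assumes "edge N F X (OrN I d) c"
  shows "ereal (heur \<rho>1 \<rho>0 \<alpha> \<beta> X Y (OrN I d))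
     \<le> cost \<rho>1 \<rho>0 \<alpha> \<beta> F X Y (OrN I d) c + ereal (heur \<rho>1 \<rho>0 \<alpha> \<beta> X Y c)"
proof (cases c)
  case (TermN J e)
  then show ?thesis by (simp only: heur_OrN_le_TermN)
next
  case (AndN J e f)
  with assms have "finite I" "f \<in> Vset F X I" "J = I" "e = d"
    using finite_subset by auto
  with AndN show ?thesis by (simp only: heur_OrN_le_AndN)
qed (use assms in simp)

end

theorem theorem8:
  fixes N F :: nat and X :: "nat \<Rightarrow> nat \<Rightarrow> bool" and Y :: "nat \<Rightarrow> bool"
    and \<rho>1 \<rho>0 \<alpha> \<beta> :: real
  assumes "\<rho>1 > 0" and "\<rho>0 > 0" and "0 < \<alpha>" and "\<alpha> < 1" and "\<beta> \<ge> 0"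
  shows "(\<forall>I d. reachable N F X (OrN I d) \<longrightarrow>
            ereal (heur \<rho>1 \<rho>0 \<alpha> \<beta> X Y (OrN I d))
              \<le> (INF c \<in> {c. edge N F X (OrN I d) c}.
                   cost \<rho>1 \<rho>0 \<alpha> \<beta> F X Y (OrN I d) c + ereal (heur \<rho>1 \<rho>0 \<alpha> \<beta> X Y c)))
       \<and> (\<forall>I d f. reachable N F X (AndN I d f) \<longrightarrow>
            ereal (heur \<rho>1 \<rho>0 \<alpha> \<beta> X Y (AndN I d f))
              \<le> (\<Sum>c \<in> {c. edge N F X (AndN I d f) c}.
                   cost \<rho>1 \<rho>0 \<alpha> \<beta> F X Y (AndN I d f) c + ereal (heur \<rho>1 \<rho>0 \<alpha> \<beta> X Y c)))"
  using heur_OrN_consistent[OF assms] heur_AndN_eq_sum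
  by (metis (no_types, lifting) INF_greatest mem_Collect_eq order_refl)

end
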